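(* Let $X$ be a shift space and let $C$ be a right asymptotic class of $X$. Then $$\omega(C)=\sum_{u\in LS_\omega(C)}\bigl(\ell_C(u)-1\bigr),$$ where the left-hand side is finite if and only if the right-hand side is finite.
   Context: $A$ is a finite alphabet; a shift space is a closed shift-invariant subset $X\subseteq A^{\mathbb Z}$. For $x\in A^{\mathbb Z}$ write $x^+=x_0x_1\cdots\in A^{\mathbb N}$ and $X^+=\{x^+:x\in X\}$. Two elements $x,y\in X$ are right asymptotically equivalent if there are shifts $x'=\sigma^i(x)$, $y'=\sigma^j(y)$ ($i,j\in\mathbb Z$) with $x'^+=y'^+$. Each equivalence class is a union of orbits; a right asymptotic class is an equivalence class containing more than one orbit. For such a class $C$, $\omega(C)=\mathrm{Card}(o(C))-1$ where $o(C)$ is the set of orbits contained in $C$ (possibly infinite). For $u\in X^+$, $\ell_C(u)=\mathrm{Card}\{a\in A: x^+=au \text{ for some } x\in C\}$, and $LS_\omega(C)$ is the set of right infinite words $u$ with $\ell_C(u)\ge 2$. *)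

theory Defs
  imports "HOL-Analysis.Analysis"
begin

definition shift :: "(int \<Rightarrow> 'a) \<Rightarrow> (int \<Rightarrow> 'a)" where
  "shift x = (\<lambda>n. x (n + 1))"

definition shiftpow :: "int \<Rightarrow> (int \<Rightarrow> 'a) \<Rightarrow> (int \<Rightarrow> 'a)" where
  "shiftpow k x = (\<lambda>n. x (n + k))"

text \<open>Closedness in the product topology of discrete alphabets: a sequence all of whose
  central windows are matched by elements of X belongs to X.\<close>
definition closed_seq :: "(int \<Rightarrow> 'a) set \<Rightarrow> bool" where
  "closed_seq X \<longleftrightarrow> (\<forall>x. (\<forall>N::nat. \<exists>y\<in>X. \<forall>i. \<bar>i\<bar> \<le> int N \<longrightarrow> y i = x i) \<longrightarrow> x \<in> X)"

definition shift_space :: "(int \<Rightarrow> 'a::finite) set \<Rightarrow> bool" where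
  "shift_space X \<longleftrightarrow> closed_seq X \<and> shift ` X = X"

definition pos_part :: "(int \<Rightarrow> 'a) \<Rightarrow> (nat \<Rightarrow> 'a)" where
  "pos_part x = (\<lambda>n. x (int n))"

definition orbit :: "(int \<Rightarrow> 'a) \<Rightarrow> (int \<Rightarrow> 'a) set" where
  "orbit x = {shiftpow k x | k. True}"

definition right_asym :: "(int \<Rightarrow> 'a) set \<Rightarrow> ((int \<Rightarrow> 'a) \<times> (int \<Rightarrow> 'a)) set" where
  "right_asym X = {(x, y). x \<in> X \<and> y \<in> X \<and>
     (\<exists>i j. pos_part (shiftpow i x) = pos_part (shiftpow j y))}"

definition orbits_of :: "(int \<Rightarrow> 'a) set \<Rightarrow> (int \<Rightarrow> 'a) set set" where
  "orbits_of C = orbit ` C"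

definition right_asymptotic_class :: "(int \<Rightarrow> 'a) set \<Rightarrow> (int \<Rightarrow> 'a) set \<Rightarrow> bool" where
  "right_asymptotic_class X C \<longleftrightarrow> C \<in> X // right_asym X \<and> (infinite (orbits_of C) \<or> card (orbits_of C) \<ge> 2)"

definition omega :: "(int \<Rightarrow> 'a) set \<Rightarrow> ennreal" where
  "omega C = (if finite (orbits_of C) then of_nat (card (orbits_of C) - 1) else \<infinity>)"

definition ell :: "(int \<Rightarrow> 'a) set \<Rightarrow> (nat \<Rightarrow> 'a) \<Rightarrow> nat" where
  "ell C u = card {a. \<exists>x\<in>C. pos_part x = (\<lambda>n. if n = 0 then a else u (n - 1))}"

definition LS_omega :: "(int \<Rightarrow> 'a) set \<Rightarrow> (nat \<Rightarrow> 'a) set" where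
  "LS_omega C = {u. ell C u \<ge> 2}"

end

theory Submission
  imports Defs
begin

text \<open>Choose a point \<open>z \<in> C\<close> whose right tails determine the letter to their left (if some
  point fails this it is eventually periodic, and closedness yields a periodic point in \<open>C\<close>).
  This gives every right tail \<open>u\<close> of \<open>C\<close> a canonical left letter \<open>m u\<close>, consistent along \<open>z\<close>.
  A branch point of \<open>x \<in> C\<close> is a position whose left letter differs from \<open>m\<close> of the tail.
  Branch points are bounded above because \<open>x\<close> is right asymptotic to \<open>z\<close>, and the points
  without branch points form the orbit of \<open>z\<close>. Each branching pair \<open>(u, a)\<close>, with \<open>a u\<close> a
  right tail of \<open>C\<close> and \<open>a \<noteq> m u\<close>, is the leftmost branch point of exactly one point of \<open>C\<close>
  (extend canonically to the left, closedness), so the branching pairs inject into the orbits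
  other than that of \<open>z\<close>. If they are finite in number, every \<open>x\<close> has finitely many branch
  points, since a repeated pair would make \<open>x\<close> periodic to the right and its branch points
  unbounded; the leftmost one shows that the injection is onto. Finally there are exactly
  \<open>\<ell>\<^sub>C(u) - 1\<close> branching pairs with tail \<open>u\<close>.\<close>

definition prepend :: "'a \<Rightarrow> (nat \<Rightarrow> 'a) \<Rightarrow> nat \<Rightarrow> 'a" where
  "prepend a u = (\<lambda>n. if n = 0 then a else u (n - 1))"

lemma prepend_eq_iff [simp]: "prepend a u = prepend b v \<longleftrightarrow> a = b \<and> u = v"
proof
  assume eq: "prepend a u = prepend b v"
  have "a = b" using fun_cong[OF eq, of 0] by (simp add: prepend_def)
  moreover have "u n = v n" for n using fun_cong[OF eq, of "Suc n"] by (simp add: prepend_def)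
  ultimately show "a = b \<and> u = v" by auto
qed simp

lemma shiftpow_shiftpow: "shiftpow a (shiftpow b x) = shiftpow (a + b) x"
  by (simp add: shiftpow_def ac_simps)

lemma shiftpow_0 [simp]: "shiftpow 0 x = x"
  by (simp add: shiftpow_def)

lemma shiftpow_apply: "shiftpow k x n = x (n + k)"
  by (simp add: shiftpow_def)

lemma pos_part_shiftpow_eq_iff:
  "pos_part (shiftpow i x) = pos_part (shiftpow j y) \<longleftrightarrow> (\<forall>t\<ge>0. x (t + i) = y (t + j))"
proof
  assume eq: "pos_part (shiftpow i x) = pos_part (shiftpow j y)"
  show "\<forall>t\<ge>0. x (t + i) = y (t + j)"
  proof (intro allI impI)
    fix t :: int assume "t \<ge> 0"
    then show "x (t + i) = y (t + j)"
      using fun_cong[OF eq, of "nat t"] by (simp add: pos_part_def shiftpow_apply)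
  qed
qed (simp add: pos_part_def shiftpow_apply fun_eq_iff)

lemma pos_part_shiftpow_pred:
  "pos_part (shiftpow (k - 1) x) = prepend (x (k - 1)) (pos_part (shiftpow k x))"
  by (auto simp: prepend_def pos_part_def shiftpow_apply fun_eq_iff of_nat_diff algebra_simps)

lemma pos_part_shiftpow_eq_add:
  assumes "pos_part (shiftpow i x) = pos_part (shiftpow j y)" and "d \<ge> 0"
  shows "pos_part (shiftpow (i + d) x) = pos_part (shiftpow (j + d) y)"
proof -
  have "x (t + d + i) = y (t + d + j)" if "t \<ge> 0" for t
    using assms that unfolding pos_part_shiftpow_eq_iff by simp
  then show ?thesis unfolding pos_part_shiftpow_eq_iff by (simp add: ac_simps)
qed

lemma pos_part_shiftpow_periodic:
  assumes "pos_part (shiftpow (k + p) x) = pos_part (shiftpow k x)" and "p \<ge> 0"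
  shows "pos_part (shiftpow (k + int q * p) x) = pos_part (shiftpow k x)"
proof (induction q)
  case (Suc q)
  have "pos_part (shiftpow (k + p + int q * p) x) = pos_part (shiftpow (k + int q * p) x)"
    using pos_part_shiftpow_eq_add[OF assms(1), of "int q * p"] assms(2) by (simp add: ac_simps)
  then show ?case using Suc.IH by (simp add: algebra_simps)
qed simp

lemma orbit_shiftpow [simp]: "orbit (shiftpow d y) = orbit y"
proof -
  have "shiftpow k y = shiftpow (k - d) (shiftpow d y)" for k
    by (simp add: shiftpow_shiftpow)
  then have "orbit y \<subseteq> orbit (shiftpow d y)" unfolding orbit_def by blast
  moreover have "orbit (shiftpow d y) \<subseteq> orbit y" unfolding orbit_def by (auto simp: shiftpow_shiftpow)
  ultimately show ?thesis by blast
qed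

lemma self_in_orbit: "x \<in> orbit x"
  unfolding orbit_def by (metis (mono_tags) mem_Collect_eq shiftpow_0)

lemma orbit_eq_imp_shiftpow: "orbit y = orbit w \<Longrightarrow> \<exists>d. w = shiftpow d y"
  using self_in_orbit[of w] unfolding orbit_def by auto

lemma eq_shiftpow_if_left_rule:
  fixes f :: "(nat \<Rightarrow> 'a) \<Rightarrow> 'a"
  assumes tails: "pos_part (shiftpow i x) = pos_part (shiftpow j y)"
    and rule_x: "\<And>k. k \<le> i \<Longrightarrow> x (k - 1) = f (pos_part (shiftpow k x))"
    and rule_y: "\<And>k. k \<le> j \<Longrightarrow> y (k - 1) = f (pos_part (shiftpow k y))"
  shows "x = shiftpow (j - i) y"
proof -
  have tails_left: "pos_part (shiftpow (i - int n) x) = pos_part (shiftpow (j - int n) y)" for n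
  proof (induction n)
    case (Suc n)
    have "pos_part (shiftpow (i - int n - 1) x) = pos_part (shiftpow (j - int n - 1) y)"
      unfolding pos_part_shiftpow_pred
      using Suc.IH rule_x[of "i - int n"] rule_y[of "j - int n"] by simp
    then show ?case by (simp add: algebra_simps)
  qed (simp add: tails)
  show ?thesis
  proof
    fix t
    define n where "n = nat (i - t)"
    have "t - i + int n \<ge> 0" unfolding n_def by simp
    then have "x ((t - i + int n) + (i - int n)) = y ((t - i + int n) + (j - int n))"
      using tails_left[of n] unfolding pos_part_shiftpow_eq_iff by blast
    then show "x t = shiftpow (j - i) y t" by (simp add: shiftpow_apply algebra_simps)
  qed
qed

definition determines_predecessor :: "(int \<Rightarrow> 'a) \<Rightarrow> bool" where
  "determines_predecessor z \<longleftrightarrow>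
     (\<forall>k l. pos_part (shiftpow k z) = pos_part (shiftpow l z) \<longrightarrow> z (k - 1) = z (l - 1))"

lemma periodic_determines_predecessor:
  assumes "p > 0" and period: "\<And>n. z (n + p) = z n"
  shows "determines_predecessor z"
  unfolding determines_predecessor_def
proof (intro allI impI)
  fix k l assume "pos_part (shiftpow k z) = pos_part (shiftpow l z)"
  then have "z (p - 1 + k) = z (p - 1 + l)"
    using \<open>p > 0\<close> unfolding pos_part_shiftpow_eq_iff by simp
  then show "z (k - 1) = z (l - 1)"
    using period[of "k - 1"] period[of "l - 1"] by (simp add: algebra_simps)
qed

locale asymptotic_class =
  fixes C :: "(int \<Rightarrow> 'a::finite) set"
  assumes nonempty: "C \<noteq> {}"
    and shiftpow_closed: "x \<in> C \<Longrightarrow> shiftpow k x \<in> C"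
    and asymptotic: "x \<in> C \<Longrightarrow> y \<in> C \<Longrightarrow> \<exists>i j. pos_part (shiftpow i x) = pos_part (shiftpow j y)"
    and left_closed: "(\<And>N::nat. \<exists>y\<in>C. \<forall>t\<ge>- int N. y t = w t) \<Longrightarrow> w \<in> C"
begin

definition right_tails :: "(nat \<Rightarrow> 'a) set" where
  "right_tails = pos_part ` C"

lemma pos_part_shiftpow_in_right_tails: "x \<in> C \<Longrightarrow> pos_part (shiftpow k x) \<in> right_tails"
  unfolding right_tails_def using shiftpow_closed by blast

lemma right_tails_prependD:
  assumes "prepend a u \<in> right_tails"
  shows "u \<in> right_tails"
proof -
  obtain x where "x \<in> C" and x: "prepend a u = pos_part x"
    using assms unfolding right_tails_def by blast
  have "pos_part x = prepend (x 0) (pos_part (shiftpow 1 x))"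
    using pos_part_shiftpow_pred[of 1 x] by simp
  then show ?thesis using x pos_part_shiftpow_in_right_tails[OF \<open>x \<in> C\<close>] by simp
qed

lemma right_tails_extend:
  assumes "u \<in> right_tails"
  shows "\<exists>a. prepend a u \<in> right_tails"
proof -
  obtain x where "x \<in> C" and x: "u = pos_part x"
    using assms unfolding right_tails_def by blast
  have "pos_part (shiftpow (- 1) x) = prepend (x (- 1)) u"
    using pos_part_shiftpow_pred[of 0 x] x by simp
  then show ?thesis using pos_part_shiftpow_in_right_tails[OF \<open>x \<in> C\<close>] by metis
qed

lemma in_class_if_left_tails:
  assumes "\<And>n. pos_part (shiftpow (- int n) w) \<in> right_tails"
  shows "w \<in> C"
proof (rule left_closed)
  fix N :: nat
  obtain y where "y \<in> C" and y: "pos_part (shiftpow (- int N) w) = pos_part (shiftpow 0 y)"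
    using assms[of N] unfolding right_tails_def by auto
  have "shiftpow (int N) y t = w t" if "t \<ge> - int N" for t
    using y that unfolding pos_part_shiftpow_eq_iff
    by (auto simp: shiftpow_apply dest: spec[of _ "t + int N"])
  then show "\<exists>y\<in>C. \<forall>t\<ge>- int N. y t = w t"
    using shiftpow_closed[OF \<open>y \<in> C\<close>] by blast
qed

lemma periodic_point_in_class:
  assumes "x \<in> C" and tails: "pos_part (shiftpow (k + p) x) = pos_part (shiftpow k x)" and "p > 0"
  shows "\<exists>z\<in>C. \<forall>n. z (n + p) = z n"
proof -
  have x_mod: "x m = x (k + (m - k) mod p)" if "m \<ge> k" for m
  proof -
    define q where "q = nat ((m - k) div p)"
    have "m = (m - k) mod p + (k + int q * p)"
      using that \<open>p > 0\<close> by (simp add: q_def pos_imp_zdiv_nonneg_iff algebra_simps)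
    moreover have "(m - k) mod p \<ge> 0" using \<open>p > 0\<close> by simp
    ultimately show ?thesis
      using pos_part_shiftpow_periodic[OF tails, of q] \<open>p > 0\<close>
      unfolding pos_part_shiftpow_eq_iff by (metis add.commute less_imp_le)
  qed
  define z where "z = (\<lambda>n. x (k + (n - k) mod p))"
  have "z (n + p) = z n" for n
    unfolding z_def by (metis add.commute add_diff_eq mod_add_self2)
  moreover have "z \<in> C"
  proof (rule in_class_if_left_tails)
    fix n
    define s where "s = (int n + \<bar>k\<bar>) * p"
    have "(int n + \<bar>k\<bar>) * 1 \<le> s"
      unfolding s_def using \<open>p > 0\<close> by (intro mult_left_mono) auto
    have "z (t + - int n) = x (t + (s - int n))" if "t \<ge> 0" for t
    proof -
      have "t + (s - int n) - k = (t + - int n - k) + (int n + \<bar>k\<bar>) * p"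
        unfolding s_def by simp
      then have "(t + (s - int n) - k) mod p = (t + - int n - k) mod p"
        by (metis mod_mult_self1)
      moreover have "t + (s - int n) \<ge> k"
        using that \<open>(int n + \<bar>k\<bar>) * 1 \<le> s\<close> abs_ge_self[of "- k"] by simp
      ultimately show ?thesis using x_mod[of "t + (s - int n)"] unfolding z_def by simp
    qed
    then have "pos_part (shiftpow (- int n) z) = pos_part (shiftpow (s - int n) x)"
      unfolding pos_part_shiftpow_eq_iff by blast
    then show "pos_part (shiftpow (- int n) z) \<in> right_tails"
      using pos_part_shiftpow_in_right_tails[OF \<open>x \<in> C\<close>] by simp
  qed
  ultimately show ?thesis by blast
qed

lemma ex_determines_predecessor: "\<exists>z\<in>C. determines_predecessor z"
proof -
  obtain x where "x \<in> C" using nonempty by blast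
  show ?thesis
  proof (cases "determines_predecessor x")
    case False
    then obtain k l where tails: "pos_part (shiftpow k x) = pos_part (shiftpow l x)" and "k \<noteq> l"
      unfolding determines_predecessor_def by blast
    obtain k' p where "pos_part (shiftpow (k' + p) x) = pos_part (shiftpow k' x)" and "p > 0"
    proof (cases "k < l")
      case True then show ?thesis using that[of k "l - k"] tails by simp
    next
      case False then show ?thesis using that[of l "k - l"] tails \<open>k \<noteq> l\<close> by simp
    qed
    then show ?thesis
      using periodic_point_in_class \<open>x \<in> C\<close> periodic_determines_predecessor by blast
  qed (use \<open>x \<in> C\<close> in blast)
qed

definition base_point :: "int \<Rightarrow> 'a" where
  "base_point = (SOME z. z \<in> C \<and> determines_predecessor z)"

lemma base_point_in_class: "base_point \<in> C"
  and base_point_determines_predecessor: "determines_predecessor base_point"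
  using someI_ex[OF ex_determines_predecessor[unfolded Bex_def]] unfolding base_point_def by auto

definition canonical_letter :: "(nat \<Rightarrow> 'a) \<Rightarrow> 'a" where
  "canonical_letter u =
     (if \<exists>k. pos_part (shiftpow k base_point) = u
      then base_point ((SOME k. pos_part (shiftpow k base_point) = u) - 1)
      else (SOME a. prepend a u \<in> right_tails))"

lemma canonical_letter_base_point:
  "canonical_letter (pos_part (shiftpow k base_point)) = base_point (k - 1)"
proof -
  define k' where "k' = (SOME k'. pos_part (shiftpow k' base_point) = pos_part (shiftpow k base_point))"
  have "pos_part (shiftpow k' base_point) = pos_part (shiftpow k base_point)"
    unfolding k'_def by (rule someI[of _ k]) (rule refl)
  then have "base_point (k' - 1) = base_point (k - 1)"
    using base_point_determines_predecessor unfolding determines_predecessor_def by blast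
  then show ?thesis unfolding canonical_letter_def k'_def by auto
qed

lemma prepend_canonical_letter_in_right_tails:
  assumes "u \<in> right_tails"
  shows "prepend (canonical_letter u) u \<in> right_tails"
proof (cases "\<exists>k. pos_part (shiftpow k base_point) = u")
  case True
  then obtain k where k: "pos_part (shiftpow k base_point) = u" by blast
  have "prepend (canonical_letter u) u = pos_part (shiftpow (k - 1) base_point)"
    using k canonical_letter_base_point pos_part_shiftpow_pred by metis
  then show ?thesis using pos_part_shiftpow_in_right_tails[OF base_point_in_class] by simp
next
  case False
  then show ?thesis
    using someI_ex[OF right_tails_extend[OF assms]] unfolding canonical_letter_def by simp
qed

definition branch_points :: "(int \<Rightarrow> 'a) \<Rightarrow> int set" where
  "branch_points x = {k. x (k - 1) \<noteq> canonical_letter (pos_part (shiftpow k x))}"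

definition branch_pairs :: "((nat \<Rightarrow> 'a) \<times> 'a) set" where
  "branch_pairs = {(u, a). prepend a u \<in> right_tails \<and> a \<noteq> canonical_letter u}"

definition pair_at :: "(int \<Rightarrow> 'a) \<Rightarrow> int \<Rightarrow> (nat \<Rightarrow> 'a) \<times> 'a" where
  "pair_at x k = (pos_part (shiftpow k x), x (k - 1))"

lemma pair_at_eq_iff:
  "pair_at x k = pair_at y l \<longleftrightarrow> pos_part (shiftpow (k - 1) x) = pos_part (shiftpow (l - 1) y)"
  unfolding pair_at_def pos_part_shiftpow_pred by auto

lemma branch_points_pair_at_cong:
  "pair_at x k = pair_at y l \<Longrightarrow> k \<in> branch_points x \<longleftrightarrow> l \<in> branch_points y"
  unfolding pair_at_def branch_points_def by simp

lemma branch_points_iff_pair_at: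
  assumes "x \<in> C"
  shows "k \<in> branch_points x \<longleftrightarrow> pair_at x k \<in> branch_pairs"
  using pos_part_shiftpow_in_right_tails[OF assms, of "k - 1"]
  unfolding branch_points_def branch_pairs_def pair_at_def pos_part_shiftpow_pred by simp

lemma branch_points_shiftpow: "branch_points (shiftpow d x) = {k. k + d \<in> branch_points x}"
  unfolding branch_points_def by (auto simp: shiftpow_shiftpow shiftpow_apply algebra_simps)

lemma branch_points_base_point: "branch_points base_point = {}"
  unfolding branch_points_def using canonical_letter_base_point by simp

lemma branch_points_bounded:
  assumes "x \<in> C"
  shows "\<exists>K. \<forall>k\<in>branch_points x. k \<le> K"
proof -
  obtain i j where tails: "pos_part (shiftpow i x) = pos_part (shiftpow j base_point)"
    using asymptotic[OF assms base_point_in_class] by blast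
  have "k \<notin> branch_points x" if "k > i" for k
  proof -
    have "pair_at x k = pair_at base_point (k - i + j)"
      using pos_part_shiftpow_eq_add[OF tails, of "k - 1 - i"] that
      unfolding pair_at_eq_iff by (simp add: algebra_simps)
    then show ?thesis
      using branch_points_pair_at_cong branch_points_base_point by blast
  qed
  then show ?thesis by (meson not_le)
qed

lemma orbit_eq_base_point_if_no_branch_points:
  assumes "x \<in> C" and "branch_points x = {}"
  shows "orbit x = orbit base_point"
proof -
  obtain i j where tails: "pos_part (shiftpow i x) = pos_part (shiftpow j base_point)"
    using asymptotic[OF assms(1) base_point_in_class] by blast
  have "x = shiftpow (j - i) base_point"
    using eq_shiftpow_if_left_rule[OF tails, of canonical_letter] assms(2) branch_points_base_point
    unfolding branch_points_def by blast
  then show ?thesis by simp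
qed

definition canonical_step :: "(nat \<Rightarrow> 'a) \<Rightarrow> nat \<Rightarrow> 'a" where
  "canonical_step u = prepend (canonical_letter u) u"

text \<open>The sequence with right tail \<open>v\<close> at position \<open>-1\<close> whose letters further left are the
  canonical ones; a single formula covers both halves, as one of the two \<open>nat\<close> arguments
  is always \<open>0\<close>.\<close>
definition canonical_extension :: "(nat \<Rightarrow> 'a) \<Rightarrow> int \<Rightarrow> 'a" where
  "canonical_extension v = (\<lambda>t. (canonical_step ^^ nat (- t - 1)) v (nat (t + 1)))"

lemma pos_part_canonical_extension:
  "pos_part (shiftpow (- int n - 1) (canonical_extension v)) = (canonical_step ^^ n) v"
proof (induction n)
  case 0
  show ?case by (simp add: pos_part_def shiftpow_apply canonical_extension_def fun_eq_iff)
next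
  case (Suc n)
  have letter: "canonical_extension v (- int n - 1 - 1) = canonical_letter ((canonical_step ^^ n) v)"
    by (simp add: canonical_extension_def canonical_step_def prepend_def nat_add_distrib)
  have "pos_part (shiftpow (- int n - 1 - 1) (canonical_extension v))
      = prepend (canonical_extension v (- int n - 1 - 1))
          (pos_part (shiftpow (- int n - 1) (canonical_extension v)))"
    by (rule pos_part_shiftpow_pred)
  also have "\<dots> = canonical_step ((canonical_step ^^ n) v)"
    unfolding letter Suc.IH canonical_step_def ..
  finally show ?case by (simp add: algebra_simps)
qed

lemma canonical_step_power_in_right_tails:
  "v \<in> right_tails \<Longrightarrow> (canonical_step ^^ n) v \<in> right_tails"
  by (induction n) (simp_all add: canonical_step_def prepend_canonical_letter_in_right_tails)

lemma canonical_extension_in_class: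
  assumes "v \<in> right_tails"
  shows "canonical_extension v \<in> C"
proof (rule in_class_if_left_tails)
  fix n
  have "prepend (canonical_extension v (- int n - 1)) (pos_part (shiftpow (- int n) (canonical_extension v)))
      = (canonical_step ^^ n) v"
    unfolding pos_part_shiftpow_pred[of "- int n", symmetric] by (rule pos_part_canonical_extension)
  then have "prepend (canonical_extension v (- int n - 1)) (pos_part (shiftpow (- int n) (canonical_extension v)))
      \<in> right_tails"
    using canonical_step_power_in_right_tails[OF assms] by simp
  then show "pos_part (shiftpow (- int n) (canonical_extension v)) \<in> right_tails"
    by (rule right_tails_prependD)
qed

lemma branch_points_canonical_extension: "branch_points (canonical_extension v) \<subseteq> {0..}"
proof
  fix k assume "k \<in> branch_points (canonical_extension v)"
  show "k \<in> {0..}"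
  proof (rule ccontr)
    assume "k \<notin> {0..}"
    define n where "n = nat (- k - 1)"
    have k: "k = - int n - 1" using \<open>k \<notin> {0..}\<close> unfolding n_def by simp
    have "pos_part (shiftpow (- int (Suc n) - 1) (canonical_extension v))
        = canonical_step (pos_part (shiftpow k (canonical_extension v)))"
      unfolding pos_part_canonical_extension k by simp
    then have "canonical_extension v (k - 1) = canonical_letter (pos_part (shiftpow k (canonical_extension v)))"
      using pos_part_shiftpow_pred[of k "canonical_extension v"]
      unfolding canonical_step_def k by (simp add: algebra_simps)
    then show False
      using \<open>k \<in> branch_points (canonical_extension v)\<close> unfolding branch_points_def by simp
  qed
qed

lemma eq_canonical_extension:
  assumes "branch_points y \<subseteq> {0..}"
  shows "y = canonical_extension (pos_part (shiftpow (- 1) y))"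
proof -
  let ?w = "canonical_extension (pos_part (shiftpow (- 1) y))"
  have "pos_part (shiftpow (- 1) y) = pos_part (shiftpow (- 1) ?w)"
    using pos_part_canonical_extension[of 0] by simp
  moreover have "k \<notin> branch_points y" and "k \<notin> branch_points ?w" if "k \<le> - 1" for k
    using that assms branch_points_canonical_extension[of "pos_part (shiftpow (- 1) y)"] by auto
  ultimately show ?thesis
    using eq_shiftpow_if_left_rule[of "- 1" y "- 1" ?w canonical_letter]
    unfolding branch_points_def by simp
qed

definition canonical_point :: "(nat \<Rightarrow> 'a) \<times> 'a \<Rightarrow> int \<Rightarrow> 'a" where
  "canonical_point e = canonical_extension (prepend (snd e) (fst e))"

lemma pair_at_canonical_point: "pair_at (canonical_point e) 0 = e"
proof -
  have "pos_part (shiftpow (0 - 1) (canonical_point e)) = prepend (snd e) (fst e)"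
    using pos_part_canonical_extension[of 0] unfolding canonical_point_def by simp
  then show ?thesis
    unfolding pos_part_shiftpow_pred pair_at_def by (simp add: prod_eq_iff)
qed

lemma canonical_point_in_class: "e \<in> branch_pairs \<Longrightarrow> canonical_point e \<in> C"
  unfolding canonical_point_def branch_pairs_def by (auto intro: canonical_extension_in_class)

lemma branch_points_canonical_point:
  assumes "e \<in> branch_pairs"
  shows "0 \<in> branch_points (canonical_point e)" and "branch_points (canonical_point e) \<subseteq> {0..}"
  using branch_points_iff_pair_at[OF canonical_point_in_class[OF assms]] pair_at_canonical_point assms
    branch_points_canonical_extension
  unfolding canonical_point_def by auto

lemma inj_on_orbit_canonical_point: "inj_on (\<lambda>e. orbit (canonical_point e)) branch_pairs"
proof (rule inj_onI)
  fix e1 e2 assume e: "e1 \<in> branch_pairs" "e2 \<in> branch_pairs"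
    and "orbit (canonical_point e1) = orbit (canonical_point e2)"
  then obtain d where d: "canonical_point e2 = shiftpow d (canonical_point e1)"
    using orbit_eq_imp_shiftpow by blast
  then have "canonical_point e1 = shiftpow (- d) (canonical_point e2)"
    by (simp add: shiftpow_shiftpow)
  then have "d \<in> branch_points (canonical_point e1)" and "- d \<in> branch_points (canonical_point e2)"
    using d branch_points_canonical_point(1)[OF e(1)] branch_points_canonical_point(1)[OF e(2)]
    by (simp_all add: branch_points_shiftpow)
  then have "d = 0"
    using branch_points_canonical_point(2)[OF e(1)] branch_points_canonical_point(2)[OF e(2)] by force
  then have "canonical_point e2 = canonical_point e1" using d by simp
  then show "e1 = e2" by (metis pair_at_canonical_point)
qed

lemma orbit_canonical_point_ne_base_point:
  assumes "e \<in> branch_pairs"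
  shows "orbit (canonical_point e) \<noteq> orbit base_point"
proof
  assume "orbit (canonical_point e) = orbit base_point"
  then obtain d where "canonical_point e = shiftpow d base_point"
    using orbit_eq_imp_shiftpow by metis
  then show False
    using branch_points_canonical_point(1)[OF assms] branch_points_base_point
    by (simp add: branch_points_shiftpow)
qed

text \<open>A repeated pair at a branch point \<open>k\<close> makes \<open>x\<close> periodic to the right of \<open>k - 1\<close>,
  which would produce arbitrarily large branch points.\<close>
lemma inj_on_pair_at_branch_points:
  assumes "x \<in> C"
  shows "inj_on (pair_at x) (branch_points x)"
proof -
  obtain K where K: "\<forall>k\<in>branch_points x. k \<le> K" using branch_points_bounded[OF assms] by blast
  have no_repeat: "pair_at x l \<noteq> pair_at x k" if "k \<in> branch_points x" "k < l" for k l
  proof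
    assume "pair_at x l = pair_at x k"
    then have tails: "pos_part (shiftpow (k - 1 + (l - k)) x) = pos_part (shiftpow (k - 1) x)"
      unfolding pair_at_eq_iff by simp
    define q where "q = nat (K - k) + 1"
    have "pos_part (shiftpow (k + int q * (l - k) - 1) x) = pos_part (shiftpow (k - 1) x)"
      using pos_part_shiftpow_periodic[OF tails, of q] that by (simp add: algebra_simps)
    then have "k + int q * (l - k) \<in> branch_points x"
      using that(1) branch_points_pair_at_cong pair_at_eq_iff by blast
    moreover have "K < k + int q * (l - k)"
    proof -
      have "K - k < int q" unfolding q_def by simp
      moreover have "int q * 1 \<le> int q * (l - k)" using that(2) by (intro mult_left_mono) auto
      ultimately show ?thesis by linarith
    qed
    ultimately show False using K by fastforce
  qed
  show ?thesis
    by (rule inj_onI) (metis linorder_neqE no_repeat)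
qed

lemma orbit_eq_canonical_point:
  assumes "finite branch_pairs" and "x \<in> C" and "branch_points x \<noteq> {}"
  shows "\<exists>e\<in>branch_pairs. orbit x = orbit (canonical_point e)"
proof -
  have "pair_at x ` branch_points x \<subseteq> branch_pairs"
    using branch_points_iff_pair_at[OF assms(2)] by auto
  then have "finite (branch_points x)"
    using finite_imageD[OF _ inj_on_pair_at_branch_points[OF assms(2)]] assms(1) finite_subset by blast
  define k0 where "k0 = Min (branch_points x)"
  have "k0 \<in> branch_points x" and k0_min: "\<And>k. k \<in> branch_points x \<Longrightarrow> k0 \<le> k"
    unfolding k0_def using \<open>finite (branch_points x)\<close> assms(3) by auto
  define y where "y = shiftpow k0 x"
  have "y \<in> C" unfolding y_def using shiftpow_closed[OF assms(2)] .
  have "0 \<in> branch_points y" and y_bp: "branch_points y \<subseteq> {0..}"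
    unfolding y_def branch_points_shiftpow using \<open>k0 \<in> branch_points x\<close> k0_min by force+
  have "y = canonical_point (pair_at y 0)"
    using eq_canonical_extension[OF y_bp] pos_part_shiftpow_pred[of 0 y]
    unfolding canonical_point_def pair_at_def by simp
  moreover have "pair_at y 0 \<in> branch_pairs"
    using branch_points_iff_pair_at[OF \<open>y \<in> C\<close>] \<open>0 \<in> branch_points y\<close> by blast
  ultimately show ?thesis unfolding y_def by (metis orbit_shiftpow)
qed

lemma omega_eq_card_branch_pairs:
  "omega C = (if finite branch_pairs then of_nat (card branch_pairs) else \<infinity>)"
proof -
  define F where "F = (\<lambda>e. orbit (canonical_point e)) ` branch_pairs"
  have F_sub: "insert (orbit base_point) F \<subseteq> orbits_of C"
    unfolding F_def orbits_of_def using base_point_in_class canonical_point_in_class by blast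
  have "orbit base_point \<notin> F"
    unfolding F_def using orbit_canonical_point_ne_base_point by blast
  have card_F: "card F = card branch_pairs"
    unfolding F_def by (rule card_image[OF inj_on_orbit_canonical_point])
  show ?thesis
  proof (cases "finite branch_pairs")
    case True
    have "orbits_of C \<subseteq> insert (orbit base_point) F"
    proof
      fix Q assume "Q \<in> orbits_of C"
      then obtain x where "x \<in> C" and Q: "Q = orbit x" unfolding orbits_of_def by blast
      show "Q \<in> insert (orbit base_point) F"
      proof (cases "branch_points x = {}")
        case True
        then show ?thesis using orbit_eq_base_point_if_no_branch_points \<open>x \<in> C\<close> Q by simp
      next
        case False
        then obtain e where "e \<in> branch_pairs" and "orbit x = orbit (canonical_point e)"
          using orbit_eq_canonical_point[OF \<open>finite branch_pairs\<close> \<open>x \<in> C\<close>] by blast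
        then show ?thesis unfolding F_def Q by blast
      qed
    qed
    then have orbits: "orbits_of C = insert (orbit base_point) F" using F_sub by blast
    have "finite F" unfolding F_def using True by blast
    then have "finite (orbits_of C)" and "card (orbits_of C) = card branch_pairs + 1"
      unfolding orbits using \<open>orbit base_point \<notin> F\<close> card_F by simp_all
    then show ?thesis using True unfolding omega_def by simp
  next
    case False
    then have "infinite F"
      unfolding F_def using finite_image_iff[OF inj_on_orbit_canonical_point] by simp
    then have "infinite (orbits_of C)" using finite_subset[OF F_sub] by auto
    then show ?thesis using False unfolding omega_def by simp
  qed
qed

definition branch_letters :: "(nat \<Rightarrow> 'a) \<Rightarrow> 'a set" where
  "branch_letters u = {a. prepend a u \<in> right_tails \<and> a \<noteq> canonical_letter u}"

lemma card_branch_letters: "card (branch_letters u) = ell C u - 1"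
proof -
  have ell: "ell C u = card {a. prepend a u \<in> right_tails}"
    unfolding ell_def right_tails_def prepend_def image_def by (auto simp: eq_commute)
  show ?thesis
  proof (cases "u \<in> right_tails")
    case True
    have "branch_letters u = {a. prepend a u \<in> right_tails} - {canonical_letter u}"
      unfolding branch_letters_def by auto
    then show ?thesis
      using ell prepend_canonical_letter_in_right_tails[OF True] by (simp add: card_Diff_singleton)
  next
    case False
    then have "{a. prepend a u \<in> right_tails} = {}" using right_tails_prependD by blast
    then show ?thesis using ell unfolding branch_letters_def by simp
  qed
qed

lemma LS_omega_eq: "LS_omega C = {u. branch_letters u \<noteq> {}}"
proof -
  have "2 \<le> ell C u \<longleftrightarrow> branch_letters u \<noteq> {}" for u
    using card_branch_letters[of u] card_gt_0_iff[of "branch_letters u"] by auto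
  then show ?thesis unfolding LS_omega_def by blast
qed

lemma branch_pairs_eq_Sigma: "branch_pairs = Sigma (LS_omega C) branch_letters"
  unfolding LS_omega_eq branch_pairs_def branch_letters_def by auto

lemma infsum_ell_eq_card_branch_pairs:
  "(\<Sum>\<^sub>\<infinity>u\<in>LS_omega C. ennreal (real (ell C u - 1)))
     = (if finite branch_pairs then of_nat (card branch_pairs) else \<infinity>)"
proof -
  have "(\<Sum>\<^sub>\<infinity>u\<in>LS_omega C. ennreal (real (ell C u - 1)))
      = (\<Sum>\<^sub>\<infinity>u\<in>LS_omega C. of_nat (card (branch_letters u)))"
    by (simp add: card_branch_letters ennreal_of_nat_eq_real_of_nat)
  also have "\<dots> = (if finite branch_pairs then of_nat (card branch_pairs) else \<infinity>)"
  proof (cases "finite (LS_omega C)")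
    case True
    then show ?thesis unfolding branch_pairs_eq_Sigma by simp
  next
    case False
    have "fst ` branch_pairs = LS_omega C"
      unfolding branch_pairs_eq_Sigma LS_omega_eq by force
    then have "infinite branch_pairs" using False by (metis finite_imageI)
    moreover have "(\<Sum>\<^sub>\<infinity>u\<in>LS_omega C. of_nat (card (branch_letters u)) :: ennreal) = \<infinity>"
    proof (rule infsum_superconst_infinite_ennreal[where b = 1])
      fix u assume "u \<in> LS_omega C"
      then show "(of_nat (card (branch_letters u)) :: ennreal) \<ge> 1"
        unfolding LS_omega_eq by (simp add: Suc_le_eq card_gt_0_iff)
    qed (use False in auto)
    ultimately show ?thesis by simp
  qed
  finally show ?thesis .
qed

lemma omega_eq_infsum_ell: "omega C = (\<Sum>\<^sub>\<infinity>u\<in>LS_omega C. ennreal (real (ell C u - 1)))"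
  unfolding omega_eq_card_branch_pairs infsum_ell_eq_card_branch_pairs ..

end

lemma shiftpow_in_shift_space:
  assumes "shift_space X" and "x \<in> X"
  shows "shiftpow k x \<in> X"
proof -
  have shift_X: "shift ` X = X" using assms(1) unfolding shift_space_def by blast
  have shift_eq: "shift = shiftpow 1"
    unfolding shift_def shiftpow_def by simp
  have forward: "shiftpow 1 y \<in> X" if "y \<in> X" for y
  proof -
    have "shift y \<in> shift ` X" using that by (rule imageI)
    then show ?thesis unfolding shift_X by (simp add: shift_eq)
  qed
  have backward: "shiftpow (- 1) y \<in> X" if "y \<in> X" for y
  proof -
    have "y \<in> shift ` X" unfolding shift_X by (rule that)
    then obtain v where "v \<in> X" and "y = shiftpow 1 v" unfolding shift_eq by (rule imageE)
    then show ?thesis by (simp add: shiftpow_shiftpow)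
  qed
  have both: "shiftpow (int n) x \<in> X \<and> shiftpow (- int n) x \<in> X" for n
  proof (induction n)
    case (Suc n)
    have "shiftpow (int (Suc n)) x = shiftpow 1 (shiftpow (int n) x)"
      and "shiftpow (- int (Suc n)) x = shiftpow (- 1) (shiftpow (- int n) x)"
      by (simp_all add: shiftpow_shiftpow algebra_simps)
    then show ?case using forward backward Suc.IH by simp
  qed (simp add: assms(2))
  show ?thesis
  proof (cases "k \<ge> 0")
    case True
    then show ?thesis using both[of "nat k"] by simp
  next
    case False
    then show ?thesis using both[of "nat (- k)"] by simp
  qed
qed

lemma equiv_right_asym: "equiv X (right_asym X)"
proof (rule equivI)
  show "refl_on X (right_asym X)"
    unfolding refl_on_def right_asym_def by blast
  show "sym (right_asym X)"
  proof (rule symI)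
    fix x y assume "(x, y) \<in> right_asym X"
    then obtain i j where "x \<in> X" "y \<in> X" and "pos_part (shiftpow j y) = pos_part (shiftpow i x)"
      unfolding right_asym_def by (auto dest: sym)
    then show "(y, x) \<in> right_asym X"
      unfolding right_asym_def by blast
  qed
  show "trans (right_asym X)"
  proof (rule transI)
    fix x y w assume "(x, y) \<in> right_asym X" and "(y, w) \<in> right_asym X"
    then obtain i j k l where "x \<in> X" "w \<in> X"
      and xy: "pos_part (shiftpow i x) = pos_part (shiftpow j y)"
      and yw: "pos_part (shiftpow k y) = pos_part (shiftpow l w)"
      unfolding right_asym_def by blast
    define M where "M = max j k"
    have "pos_part (shiftpow (i + (M - j)) x) = pos_part (shiftpow (l + (M - k)) w)"
      using pos_part_shiftpow_eq_add[OF xy, of "M - j"] pos_part_shiftpow_eq_add[OF yw, of "M - k"]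
      unfolding M_def by simp
    then show "(x, w) \<in> right_asym X"
      unfolding right_asym_def using \<open>x \<in> X\<close> \<open>w \<in> X\<close> by blast
  qed
qed (auto simp: right_asym_def)

lemma asymptotic_class_if_in_quotient:
  assumes "shift_space X" and C: "C \<in> X // right_asym X"
  shows "asymptotic_class C"
proof
  note class_rules = in_quotient_imp_closed[OF equiv_right_asym C]
    in_quotient_imp_subset[OF equiv_right_asym C]
  show "C \<noteq> {}" using in_quotient_imp_non_empty[OF equiv_right_asym C] .
  show "x \<in> C \<Longrightarrow> y \<in> C \<Longrightarrow> \<exists>i j. pos_part (shiftpow i x) = pos_part (shiftpow j y)" for x y
    using in_quotient_imp_in_rel[OF equiv_right_asym C, of x y] unfolding right_asym_def by blast
  show "shiftpow k x \<in> C" if "x \<in> C" for x k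
  proof -
    have "shiftpow k x \<in> X" using shiftpow_in_shift_space[OF assms(1)] that class_rules(2) by blast
    moreover have "pos_part (shiftpow k x) = pos_part (shiftpow 0 (shiftpow k x))" by simp
    ultimately have "(x, shiftpow k x) \<in> right_asym X"
      using that class_rules(2) unfolding right_asym_def by blast
    then show ?thesis using class_rules(1) that by blast
  qed
  show "w \<in> C" if approx: "\<And>N::nat. \<exists>y\<in>C. \<forall>t\<ge>- int N. y t = w t" for w
  proof -
    have "\<exists>y\<in>X. \<forall>i. \<bar>i\<bar> \<le> int N \<longrightarrow> y i = w i" for N
    proof -
      obtain y where "y \<in> C" and "\<forall>t\<ge>- int N. y t = w t" using approx[of N] by blast
      then show ?thesis using class_rules(2) by (metis abs_le_iff minus_le_iff subsetD)
    qed
    then have "w \<in> X" using assms(1) unfolding shift_space_def closed_seq_def by blast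
    obtain y where "y \<in> C" and "\<forall>t\<ge>0. y t = w t" using approx[of 0] by auto
    then have "(y, w) \<in> right_asym X"
      using \<open>w \<in> X\<close> class_rules(2) unfolding right_asym_def
      by (auto simp: pos_part_def intro!: exI[of _ 0])
    then show ?thesis using class_rules(1) \<open>y \<in> C\<close> by blast
  qed
qed

theorem mainTheorem5:
  fixes X C :: "(int \<Rightarrow> 'a::finite) set"
  assumes "shift_space X"
    and "right_asymptotic_class X C"
  shows "omega C = (\<Sum>\<^sub>\<infinity>u\<in>LS_omega C. ennreal (real (ell C u - 1)))"
proof -
  have "C \<in> X // right_asym X" using assms(2) unfolding right_asymptotic_class_def by blast
  then have "asymptotic_class C" by (rule asymptotic_class_if_in_quotient[OF assms(1)])
  then show ?thesis by (rule asymptotic_class.omega_eq_infsum_ell)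
qed

end
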